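(* Let $\alpha\in(0,1)$, $R>1$, and $\varphi(t)=\min\{1,(R-|t|)^+\}$. For $\varepsilon>0$ let $u_\varepsilon(t)=\varepsilon^2\sin(t/\varepsilon^2)\,\varphi(t)$ and define, for $y\in\mathbb R$, $$ G_\varepsilon(y)=\frac1\varepsilon\int_{\mathbb R}\rho_\varepsilon(x-y)\,\bigl(u_\varepsilon(x)-u_\varepsilon(y)\bigr)\frac{x-y}{|x-y|}\,dx,\qquad \rho_\varepsilon(\xi)=\frac1\varepsilon\Bigl|\frac\xi\varepsilon\Bigr|^{-1-\alpha}. $$ Then there is a constant $C=C(\alpha,R)$ such that $\int_{\mathbb R}|G_\varepsilon(y)|^2\,dy\le C\,\varepsilon^{1-\alpha}$ for all $\varepsilon\in(0,1)$, so $\int_{\mathbb R}|G_\varepsilon|^2\,dy\to0$ as $\varepsilon\to0$, while $\liminf_{\varepsilon\to0}\|u_\varepsilon'\|^2_{L^2(\mathbb R)}>0$. Consequently there is no constant $c>0$ such that $\int_{\mathbb R}|G_\varepsilon|^2\,dy\ge c\,\|u_\varepsilon'\|^2_{L^2(\mathbb R)}$ for all small $\varepsilon$.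
   Context: The integral defining $G_\varepsilon(y)$ converges absolutely since $u_\varepsilon$ is bounded and Lipschitz and $\alpha<1$. The quantity $\int_{\mathbb R}|G_\varepsilon|^2dy$ is the quadratic energy $\int_{\mathbb R}|\nabla_{\rho_\varepsilon}u_\varepsilon|^2$ for the scaled (and normalized by $1/\varepsilon$) nonlocal gradient with Riesz kernel $\rho(\xi)=|\xi|^{-1-\alpha}$. *)

theory Defs
  imports "HOL-Analysis.Analysis"
begin

definition cutoff :: "real \<Rightarrow> real \<Rightarrow> real" where
  "cutoff R t = min 1 (max 0 (R - \<bar>t\<bar>))"

definition u_eps :: "real \<Rightarrow> real \<Rightarrow> real \<Rightarrow> real" where
  "u_eps R \<epsilon> t = \<epsilon>\<^sup>2 * sin (t / \<epsilon>\<^sup>2) * cutoff R t"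

definition rho_eps :: "real \<Rightarrow> real \<Rightarrow> real \<Rightarrow> real" where
  "rho_eps \<alpha> \<epsilon> \<xi> = (1 / \<epsilon>) * (\<bar>\<xi> / \<epsilon>\<bar>) powr (-1 - \<alpha>)"

text \<open>Integrand of G_eps(y), as a function of x. (x-y)/|x-y| = sgn(x-y).\<close>
definition G_integrand :: "real \<Rightarrow> real \<Rightarrow> real \<Rightarrow> real \<Rightarrow> real \<Rightarrow> real" where
  "G_integrand \<alpha> R \<epsilon> y x =
     rho_eps \<alpha> \<epsilon> (x - y) * (u_eps R \<epsilon> x - u_eps R \<epsilon> y) * sgn (x - y)"

definition G_eps :: "real \<Rightarrow> real \<Rightarrow> real \<Rightarrow> real \<Rightarrow> real" where
  "G_eps \<alpha> R \<epsilon> y = (1 / \<epsilon>) * (\<integral>x. G_integrand \<alpha> R \<epsilon> y x \<partial>lborel)"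

definition G_energy :: "real \<Rightarrow> real \<Rightarrow> real \<Rightarrow> ennreal" where
  "G_energy \<alpha> R \<epsilon> = (\<integral>\<^sup>+ y. ennreal ((G_eps \<alpha> R \<epsilon> y)\<^sup>2) \<partial>lborel)"

definition deriv_energy :: "real \<Rightarrow> real \<Rightarrow> ennreal" where
  "deriv_energy R \<epsilon> = (\<integral>\<^sup>+ t. ennreal ((deriv (u_eps R \<epsilon>) t)\<^sup>2) \<partial>lborel)"

end

theory Submission
  imports Defs
begin

text \<open>
  Since u is bounded by eps^2 and Lipschitz with constant 1 + eps^2, the integrand of G(y) is
  bounded by rho_eps(h) min((1 + eps^2)|h|, 2 eps^2), h = x - y. The substitution h = eps^2 s
  turns its integral into eps^(2-alpha) times the Riesz integral of |s|^(-1-alpha) min(|s|, 1),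
  which is finite exactly because 0 < alpha < 1; hence |G(y)| <= C eps^(1-alpha). For |y| >= 2R
  the kernel is at most 2/|y| on the support of u, so |G(y)| <= 4 R eps / |y|, which is square
  integrable. Thus the energy of G is O(eps^(1-alpha)), whereas u' = cos(t/eps^2) on |t| < R - 1,
  so the energy of u' stays above (R - 1)/4.
\<close>

lemma abs_sin_diff_le: "\<bar>sin a - sin b\<bar> \<le> \<bar>a - b\<bar>" for a b :: real
proof -
  have "\<bar>sin a - sin b\<bar> = 2 * (\<bar>sin ((a - b) / 2)\<bar> * \<bar>cos ((a + b) / 2)\<bar>)"
    by (simp add: sin_diff_sin abs_mult)
  also have "\<dots> \<le> 2 * (\<bar>(a - b) / 2\<bar> * 1)"
    by (intro mult_left_mono mult_mono abs_sin_x_le_abs_x) auto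
  finally show ?thesis by simp
qed

lemma nn_integral_abs_arg_le:
  fixes g :: "real \<Rightarrow> ennreal"
  assumes [measurable]: "g \<in> borel_measurable borel"
  shows "(\<integral>\<^sup>+x. g \<bar>x\<bar> \<partial>lborel) \<le> 2 * (\<integral>\<^sup>+x. g x * indicator {0..} x \<partial>lborel)"
proof -
  define h where "h x = g x * indicator {0..} x" for x
  have [measurable]: "h \<in> borel_measurable borel" unfolding h_def by measurable
  have "(\<integral>\<^sup>+x. g \<bar>x\<bar> \<partial>lborel) \<le> (\<integral>\<^sup>+x. h x + h (0 + (-1) * x) \<partial>lborel)"
    by (rule nn_integral_mono) (auto simp: h_def indicator_def)
  also have "\<dots> = (\<integral>\<^sup>+x. h x \<partial>lborel) + (\<integral>\<^sup>+x. h (0 + (-1) * x) \<partial>lborel)"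
    by (rule nn_integral_add) measurable
  also have "(\<integral>\<^sup>+x. h (0 + (-1) * x) \<partial>lborel) = (\<integral>\<^sup>+x. h x \<partial>lborel)"
    using nn_integral_real_affine[of h "-1" 0] by simp
  finally show ?thesis unfolding h_def by (simp add: mult_2)
qed

lemma nn_integral_powr_0_1:
  assumes "a > -1"
  shows "(\<integral>\<^sup>+x. ennreal (x powr a) * indicator {0..1} x \<partial>lborel) = ennreal (1 / (a + 1))"
  using has_integral_powr_from_0[OF assms, of 1]
  by (intro nn_integral_has_integral_lebesgue') auto

lemma nn_integral_powr_1_inf:
  assumes "a < -1"
  shows "(\<integral>\<^sup>+x. ennreal (x powr a) * indicator {1..} x \<partial>lborel) = ennreal (- 1 / (a + 1))"
  using has_integral_powr_to_inf[OF assms, of 1]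
  by (intro nn_integral_has_integral_lebesgue') auto

lemma nn_integral_riesz_min_le:
  assumes "0 < \<alpha>" "\<alpha> < 1"
  shows "(\<integral>\<^sup>+s. ennreal (\<bar>s\<bar> powr (-1-\<alpha>) * min \<bar>s\<bar> 1) \<partial>lborel) \<le> ennreal (2/(1-\<alpha>) + 2/\<alpha>)"
proof -
  define g where "g s = ennreal (s powr (-1-\<alpha>) * min s 1)" for s :: real
  have [measurable]: "g \<in> borel_measurable borel" unfolding g_def by measurable
  have "(\<integral>\<^sup>+s. g \<bar>s\<bar> \<partial>lborel) \<le> 2 * (\<integral>\<^sup>+x. g x * indicator {0..} x \<partial>lborel)"
    by (rule nn_integral_abs_arg_le) measurable
  also have "(\<integral>\<^sup>+x. g x * indicator {0..} x \<partial>lborel) \<le>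
     (\<integral>\<^sup>+x. ennreal (x powr (-\<alpha>)) * indicator {0..1} x + ennreal (x powr (-1-\<alpha>)) * indicator {1..} x \<partial>lborel)"
  proof (rule nn_integral_mono)
    fix x :: real
    have "x powr (-1-\<alpha>) * x = x powr (-\<alpha>)" if "0 < x"
      using that by (simp add: powr_mult_base mult.commute)
    then show "g x * indicator {0..} x \<le>
        ennreal (x powr (-\<alpha>)) * indicator {0..1} x + ennreal (x powr (-1-\<alpha>)) * indicator {1..} x"
      by (cases "x \<le> 0"; cases "x \<le> 1") (auto simp: indicator_def g_def)
  qed
  also have "\<dots> = (\<integral>\<^sup>+x. ennreal (x powr (-\<alpha>)) * indicator {0..1} x \<partial>lborel)
      + (\<integral>\<^sup>+x. ennreal (x powr (-1-\<alpha>)) * indicator {1..} x \<partial>lborel)"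
    by (rule nn_integral_add) measurable
  also have "\<dots> = ennreal (1/(1-\<alpha>)) + ennreal (1/\<alpha>)"
    using nn_integral_powr_0_1[of "-\<alpha>"] nn_integral_powr_1_inf[of "-1-\<alpha>"] assms by simp
  also have "2 * \<dots> = ennreal (2/(1-\<alpha>) + 2/\<alpha>)"
  proof -
    have "2 * ennreal (1/(1-\<alpha>) + 1/\<alpha>) = ennreal (2 * (1/(1-\<alpha>) + 1/\<alpha>))"
      by (subst ennreal_mult') simp_all
    then show ?thesis
      using assms by (simp add: ennreal_plus[symmetric] distrib_left del: ennreal_plus)
  qed
  finally show ?thesis by (simp add: g_def mult_left_mono)
qed

lemma nn_integral_inverse_square_tail:
  "(\<integral>\<^sup>+y. ennreal (if 1 \<le> \<bar>y\<bar> then \<bar>y\<bar> powr (-2) else 0) \<partial>lborel) \<le> 2"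
proof -
  define g where "g s = ennreal (if 1 \<le> s then s powr (-2) else 0)" for s :: real
  have [measurable]: "g \<in> borel_measurable borel" unfolding g_def by measurable
  have "(\<integral>\<^sup>+y. g \<bar>y\<bar> \<partial>lborel) \<le> 2 * (\<integral>\<^sup>+x. g x * indicator {0..} x \<partial>lborel)"
    by (rule nn_integral_abs_arg_le) measurable
  also have "(\<integral>\<^sup>+x. g x * indicator {0..} x \<partial>lborel) = (\<integral>\<^sup>+x. ennreal (x powr (-2)) * indicator {1..} x \<partial>lborel)"
    by (rule nn_integral_cong) (auto simp: g_def indicator_def)
  also have "\<dots> = 1" using nn_integral_powr_1_inf[of "-2"] by simp
  finally show ?thesis by (simp add: g_def)
qed

lemma cutoff_nonneg: "0 \<le> cutoff R t"
  by (simp add: cutoff_def)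

lemma cutoff_le_one: "cutoff R t \<le> 1"
  by (simp add: cutoff_def)

lemma cutoff_eq_0: "R \<le> \<bar>t\<bar> \<Longrightarrow> cutoff R t = 0"
  by (simp add: cutoff_def)

lemma cutoff_eq_1: "\<bar>t\<bar> \<le> R - 1 \<Longrightarrow> cutoff R t = 1"
  by (simp add: cutoff_def)

lemma abs_cutoff_diff_le: "\<bar>cutoff R x - cutoff R y\<bar> \<le> \<bar>x - y\<bar>"
  unfolding cutoff_def by (auto simp: min_def max_def abs_if)

lemma abs_u_eps_le: "\<bar>u_eps R \<epsilon> t\<bar> \<le> \<epsilon>\<^sup>2"
proof -
  have "\<bar>u_eps R \<epsilon> t\<bar> = \<epsilon>\<^sup>2 * \<bar>sin (t / \<epsilon>\<^sup>2)\<bar> * cutoff R t"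
    by (simp add: u_eps_def abs_mult cutoff_nonneg)
  also have "\<dots> \<le> \<epsilon>\<^sup>2 * 1 * 1"
    by (intro mult_mono) (auto simp: cutoff_le_one cutoff_nonneg)
  finally show ?thesis by simp
qed

lemma u_eps_eq_0: "R \<le> \<bar>t\<bar> \<Longrightarrow> u_eps R \<epsilon> t = 0"
  by (simp add: u_eps_def cutoff_eq_0)

lemma abs_u_eps_diff_le:
  assumes "\<epsilon> \<noteq> 0"
  shows "\<bar>u_eps R \<epsilon> x - u_eps R \<epsilon> y\<bar> \<le> (1 + \<epsilon>\<^sup>2) * \<bar>x - y\<bar>"
proof -
  have "u_eps R \<epsilon> x - u_eps R \<epsilon> y =
      \<epsilon>\<^sup>2 * (sin (x / \<epsilon>\<^sup>2) - sin (y / \<epsilon>\<^sup>2)) * cutoff R x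
      + \<epsilon>\<^sup>2 * sin (y / \<epsilon>\<^sup>2) * (cutoff R x - cutoff R y)"
    by (simp add: u_eps_def algebra_simps)
  also have "\<bar>\<dots>\<bar> \<le> \<epsilon>\<^sup>2 * \<bar>sin (x / \<epsilon>\<^sup>2) - sin (y / \<epsilon>\<^sup>2)\<bar> * cutoff R x
      + \<epsilon>\<^sup>2 * \<bar>sin (y / \<epsilon>\<^sup>2)\<bar> * \<bar>cutoff R x - cutoff R y\<bar>"
    by (rule order_trans[OF abs_triangle_ineq]) (simp add: abs_mult cutoff_nonneg)
  also have "\<dots> \<le> \<epsilon>\<^sup>2 * \<bar>x / \<epsilon>\<^sup>2 - y / \<epsilon>\<^sup>2\<bar> * 1 + \<epsilon>\<^sup>2 * 1 * \<bar>x - y\<bar>"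
    by (intro add_mono mult_mono abs_sin_diff_le abs_cutoff_diff_le)
       (auto simp: cutoff_le_one cutoff_nonneg)
  also have "\<epsilon>\<^sup>2 * \<bar>x / \<epsilon>\<^sup>2 - y / \<epsilon>\<^sup>2\<bar> = \<bar>x - y\<bar>"
    using assms by (simp add: diff_divide_distrib[symmetric] abs_div)
  finally show ?thesis by (simp add: algebra_simps)
qed

lemma rho_eps_nonneg: "0 < \<epsilon> \<Longrightarrow> 0 \<le> rho_eps \<alpha> \<epsilon> \<xi>"
  by (simp add: rho_eps_def)

lemma rho_eps_scaled:
  assumes "0 < \<epsilon>"
  shows "rho_eps \<alpha> \<epsilon> (\<epsilon>\<^sup>2 * s) = \<epsilon> powr (-2-\<alpha>) * \<bar>s\<bar> powr (-1-\<alpha>)"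
proof -
  have "\<bar>\<epsilon>\<^sup>2 * s / \<epsilon>\<bar> = \<epsilon> * \<bar>s\<bar>"
    using assms by (simp add: power2_eq_square abs_mult)
  then have "rho_eps \<alpha> \<epsilon> (\<epsilon>\<^sup>2 * s) = 1 / \<epsilon> * \<epsilon> powr (-1-\<alpha>) * \<bar>s\<bar> powr (-1-\<alpha>)"
    using assms by (simp add: rho_eps_def powr_mult)
  also have "1 / \<epsilon> * \<epsilon> powr (-1-\<alpha>) = \<epsilon> powr (-2-\<alpha>)"
    using assms by (simp add: powr_diff powr_minus_divide field_simps power2_eq_square)
  finally show ?thesis .
qed

lemma abs_G_integrand_le:
  assumes "0 < \<epsilon>"
  shows "\<bar>G_integrand \<alpha> R \<epsilon> y x\<bar> \<le> rho_eps \<alpha> \<epsilon> (x - y) * min ((1 + \<epsilon>\<^sup>2) * \<bar>x - y\<bar>) (2 * \<epsilon>\<^sup>2)"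
proof -
  have "\<bar>u_eps R \<epsilon> x - u_eps R \<epsilon> y\<bar> \<le> min ((1 + \<epsilon>\<^sup>2) * \<bar>x - y\<bar>) (2 * \<epsilon>\<^sup>2)"
    using abs_u_eps_diff_le[of \<epsilon> R x y] abs_u_eps_le[of R \<epsilon> x] abs_u_eps_le[of R \<epsilon> y] assms
    by auto
  then have "rho_eps \<alpha> \<epsilon> (x - y) * \<bar>u_eps R \<epsilon> x - u_eps R \<epsilon> y\<bar> * \<bar>sgn (x - y)\<bar>
      \<le> rho_eps \<alpha> \<epsilon> (x - y) * min ((1 + \<epsilon>\<^sup>2) * \<bar>x - y\<bar>) (2 * \<epsilon>\<^sup>2) * 1"
    by (intro mult_mono mult_left_mono) (auto simp: rho_eps_nonneg[OF assms] abs_sgn_eq)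
  then show ?thesis
    by (simp add: G_integrand_def abs_mult rho_eps_nonneg[OF assms])
qed

lemma min_mult_abs_le: "0 \<le> L \<Longrightarrow> min (L * \<bar>s\<bar>) 2 \<le> (L + 2) * min \<bar>s\<bar> (1::real)"
  by (cases "\<bar>s\<bar> \<le> 1") (auto simp: min_def algebra_simps intro: order_trans[of _ "L * \<bar>s\<bar>"])

lemma nn_integral_rho_eps_min_le:
  assumes "0 < \<epsilon>" "0 \<le> L" "0 < \<alpha>" "\<alpha> < 1"
  shows "(\<integral>\<^sup>+h. ennreal (rho_eps \<alpha> \<epsilon> h * min (L * \<bar>h\<bar>) (2 * \<epsilon>\<^sup>2)) \<partial>lborel)
    \<le> ennreal (\<epsilon> powr (2-\<alpha>) * (L + 2) * (2/(1-\<alpha>) + 2/\<alpha>))"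
proof -
  define k where "k h = rho_eps \<alpha> \<epsilon> h * min (L * \<bar>h\<bar>) (2 * \<epsilon>\<^sup>2)" for h
  define c where "c = \<epsilon> powr (2-\<alpha>) * (L + 2)"
  have [measurable]: "k \<in> borel_measurable borel"
    unfolding k_def rho_eps_def by measurable
  have c_nonneg: "0 \<le> c"
    using assms by (simp add: c_def)
  have scaled: "\<epsilon>\<^sup>2 * k (\<epsilon>\<^sup>2 * s) \<le> c * (\<bar>s\<bar> powr (-1-\<alpha>) * min \<bar>s\<bar> 1)" for s
  proof -
    have "\<epsilon>\<^sup>2 = \<epsilon> powr 2"
      using assms by (simp add: powr_numeral)
    moreover have "\<epsilon> powr 2 * \<epsilon> powr (-2-\<alpha>) * \<epsilon> powr 2 = \<epsilon> powr (2 + (-2-\<alpha>) + 2)"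
      by (simp only: powr_add)
    ultimately have powers: "\<epsilon>\<^sup>2 * \<epsilon> powr (-2-\<alpha>) * \<epsilon>\<^sup>2 = \<epsilon> powr (2-\<alpha>)"
      by simp
    have "min (L * \<bar>\<epsilon>\<^sup>2 * s\<bar>) (2 * \<epsilon>\<^sup>2) = \<epsilon>\<^sup>2 * min (L * \<bar>s\<bar>) 2"
      by (simp add: abs_mult min_mult_distrib_left mult_ac)
    with powers have "\<epsilon>\<^sup>2 * k (\<epsilon>\<^sup>2 * s) = \<epsilon> powr (2-\<alpha>) * (\<bar>s\<bar> powr (-1-\<alpha>) * min (L * \<bar>s\<bar>) 2)"
      unfolding k_def rho_eps_scaled[OF assms(1)] by (metis mult.assoc mult.left_commute)
    also have "\<dots> \<le> \<epsilon> powr (2-\<alpha>) * (\<bar>s\<bar> powr (-1-\<alpha>) * ((L + 2) * min \<bar>s\<bar> 1))"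
      using assms by (intro mult_left_mono min_mult_abs_le) auto
    finally show ?thesis by (simp add: c_def mult_ac)
  qed
  have "(\<integral>\<^sup>+h. ennreal (k h) \<partial>lborel) = ennreal \<bar>\<epsilon>\<^sup>2\<bar> * (\<integral>\<^sup>+s. ennreal (k (0 + \<epsilon>\<^sup>2 * s)) \<partial>lborel)"
    using assms by (intro nn_integral_real_affine) auto
  also have "\<dots> = (\<integral>\<^sup>+s. ennreal (\<epsilon>\<^sup>2 * k (\<epsilon>\<^sup>2 * s)) \<partial>lborel)"
    by (subst nn_integral_cmult[symmetric]) (auto simp: ennreal_mult')
  also have "\<dots> \<le> (\<integral>\<^sup>+s. ennreal c * ennreal (\<bar>s\<bar> powr (-1-\<alpha>) * min \<bar>s\<bar> 1) \<partial>lborel)"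
    using scaled c_nonneg by (intro nn_integral_mono) (simp add: ennreal_mult'[symmetric])
  also have "\<dots> = ennreal c * (\<integral>\<^sup>+s. ennreal (\<bar>s\<bar> powr (-1-\<alpha>) * min \<bar>s\<bar> 1) \<partial>lborel)"
    by (rule nn_integral_cmult) measurable
  also have "\<dots> \<le> ennreal c * ennreal (2/(1-\<alpha>) + 2/\<alpha>)"
    using nn_integral_riesz_min_le[OF assms(3,4)] by (rule mult_left_mono) simp
  also have "\<dots> = ennreal (c * (2/(1-\<alpha>) + 2/\<alpha>))"
    using c_nonneg by (simp add: ennreal_mult')
  finally show ?thesis by (simp add: k_def c_def)
qed

lemma nn_integral_abs_G_integrand_le:
  assumes "0 < \<epsilon>" "0 < \<alpha>" "\<alpha> < 1"
  shows "(\<integral>\<^sup>+x. ennreal \<bar>G_integrand \<alpha> R \<epsilon> y x\<bar> \<partial>lborel)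
    \<le> ennreal (\<epsilon> powr (2-\<alpha>) * (3 + \<epsilon>\<^sup>2) * (2/(1-\<alpha>) + 2/\<alpha>))"
proof -
  define k where "k h = rho_eps \<alpha> \<epsilon> h * min ((1 + \<epsilon>\<^sup>2) * \<bar>h\<bar>) (2 * \<epsilon>\<^sup>2)" for h
  have [measurable]: "k \<in> borel_measurable borel"
    unfolding k_def rho_eps_def by measurable
  have "(\<integral>\<^sup>+x. ennreal \<bar>G_integrand \<alpha> R \<epsilon> y x\<bar> \<partial>lborel) \<le> (\<integral>\<^sup>+x. ennreal (k (x - y)) \<partial>lborel)"
    unfolding k_def using abs_G_integrand_le[OF assms(1)] by (intro nn_integral_mono ennreal_leI)
  also have "\<dots> = (\<integral>\<^sup>+h. ennreal (k h) \<partial>lborel)"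
    using nn_integral_real_affine[of "\<lambda>x. ennreal (k (x - y))" 1 y] by simp
  also have "\<dots> \<le> ennreal (\<epsilon> powr (2-\<alpha>) * ((1 + \<epsilon>\<^sup>2) + 2) * (2/(1-\<alpha>) + 2/\<alpha>))"
    unfolding k_def using assms by (intro nn_integral_rho_eps_min_le) auto
  finally show ?thesis by (simp add: add.commute add.left_commute)
qed

lemma integrable_G_integrand:
  assumes "0 < \<epsilon>" "0 < \<alpha>" "\<alpha> < 1"
  shows "integrable lborel (G_integrand \<alpha> R \<epsilon> y)"
proof (rule integrableI_bounded)
  show "G_integrand \<alpha> R \<epsilon> y \<in> borel_measurable lborel"
    unfolding G_integrand_def rho_eps_def u_eps_def cutoff_def by measurable
  show "(\<integral>\<^sup>+x. ennreal (norm (G_integrand \<alpha> R \<epsilon> y x)) \<partial>lborel) < \<infinity>"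
    using nn_integral_abs_G_integrand_le[OF assms, of R y] by (simp add: le_less_trans)
qed

lemma abs_G_eps_le:
  assumes "0 < \<epsilon>" "integrable lborel (G_integrand \<alpha> R \<epsilon> y)" "0 \<le> B"
    and "(\<integral>\<^sup>+x. ennreal \<bar>G_integrand \<alpha> R \<epsilon> y x\<bar> \<partial>lborel) \<le> ennreal B"
  shows "\<bar>G_eps \<alpha> R \<epsilon> y\<bar> \<le> B / \<epsilon>"
proof -
  have "ennreal \<bar>\<integral>x. G_integrand \<alpha> R \<epsilon> y x \<partial>lborel\<bar> \<le> ennreal B"
    using integral_norm_bound_ennreal[OF assms(2)] assms(4) by simp
  then have "\<bar>\<integral>x. G_integrand \<alpha> R \<epsilon> y x \<partial>lborel\<bar> \<le> B"
    using assms(3) by simp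
  then show ?thesis
    using assms(1) by (simp add: G_eps_def abs_mult divide_right_mono)
qed

lemma abs_G_eps_le_near:
  assumes "0 < \<epsilon>" "0 < \<alpha>" "\<alpha> < 1"
  shows "\<bar>G_eps \<alpha> R \<epsilon> y\<bar> \<le> \<epsilon> powr (1-\<alpha>) * (3 + \<epsilon>\<^sup>2) * (2/(1-\<alpha>) + 2/\<alpha>)"
proof -
  have "\<bar>G_eps \<alpha> R \<epsilon> y\<bar> \<le> \<epsilon> powr (2-\<alpha>) * (3 + \<epsilon>\<^sup>2) * (2/(1-\<alpha>) + 2/\<alpha>) / \<epsilon>"
    using assms by (intro abs_G_eps_le integrable_G_integrand nn_integral_abs_G_integrand_le) auto
  also have "\<epsilon> powr (2-\<alpha>) = \<epsilon> * \<epsilon> powr (1-\<alpha>)"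
    using assms powr_mult_base[of \<epsilon> "1-\<alpha>"] by simp
  finally show ?thesis
    using assms by simp
qed

lemma abs_G_integrand_le_far:
  assumes "0 < \<epsilon>" "\<epsilon> < 1" "1 < R" "2 * R \<le> \<bar>y\<bar>" "0 \<le> \<alpha>"
  shows "\<bar>G_integrand \<alpha> R \<epsilon> y x\<bar> \<le> 2 * \<epsilon>\<^sup>2 / \<bar>y\<bar> * indicator {-R..R} x"
proof (cases "\<bar>x\<bar> \<le> R")
  case False
  then show ?thesis
    using assms by (simp add: G_integrand_def u_eps_eq_0)
next
  case True
  txt \<open>Here |x - y| \<ge> |y|/2 \<ge> R > \<epsilon>, where the kernel is dominated by its 1/|x - y| tail.\<close>
  have "\<bar>y\<bar> \<le> \<bar>x\<bar> + \<bar>x - y\<bar>"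
    by linarith
  then have dist_ge: "\<bar>y\<bar> / 2 \<le> \<bar>x - y\<bar>" "1 \<le> \<bar>x - y\<bar>"
    using True assms by auto
  have "rho_eps \<alpha> \<epsilon> (x - y) \<le> 1 / \<epsilon> * \<bar>(x - y) / \<epsilon>\<bar> powr (-1)"
    unfolding rho_eps_def using assms dist_ge
    by (intro mult_left_mono powr_mono) (auto simp: abs_div)
  also have "\<dots> = 1 / \<bar>x - y\<bar>"
    using assms by (simp add: powr_minus_divide abs_div)
  also have "\<dots> \<le> 2 / \<bar>y\<bar>"
  proof -
    have "0 < \<bar>y\<bar>" "0 < \<bar>x - y\<bar>"
      using assms dist_ge by linarith+
    then show ?thesis
      using dist_ge by (simp add: field_simps)
  qed
  finally have "rho_eps \<alpha> \<epsilon> (x - y) * \<bar>u_eps R \<epsilon> x\<bar> * \<bar>sgn (x - y)\<bar> \<le> 2 / \<bar>y\<bar> * \<epsilon>\<^sup>2 * 1"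
    by (intro mult_mono abs_u_eps_le) (auto simp: rho_eps_nonneg[OF assms(1)] abs_sgn_eq)
  then show ?thesis
    using True assms
    by (simp add: G_integrand_def u_eps_eq_0 abs_mult rho_eps_nonneg indicator_def abs_le_iff)
qed

lemma abs_G_eps_le_far:
  assumes "0 < \<epsilon>" "\<epsilon> < 1" "1 < R" "2 * R \<le> \<bar>y\<bar>" "0 < \<alpha>" "\<alpha> < 1"
  shows "\<bar>G_eps \<alpha> R \<epsilon> y\<bar> \<le> 4 * R * \<epsilon> / \<bar>y\<bar>"
proof -
  have "(\<integral>\<^sup>+x. ennreal \<bar>G_integrand \<alpha> R \<epsilon> y x\<bar> \<partial>lborel)
      \<le> (\<integral>\<^sup>+x. ennreal (2 * \<epsilon>\<^sup>2 / \<bar>y\<bar>) * indicator {-R..R} x \<partial>lborel)"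
  proof (rule nn_integral_mono)
    fix x
    have "\<bar>G_integrand \<alpha> R \<epsilon> y x\<bar> \<le> 2 * \<epsilon>\<^sup>2 / \<bar>y\<bar> * indicator {-R..R} x"
      using assms by (intro abs_G_integrand_le_far) auto
    then show "ennreal \<bar>G_integrand \<alpha> R \<epsilon> y x\<bar> \<le> ennreal (2 * \<epsilon>\<^sup>2 / \<bar>y\<bar>) * indicator {-R..R} x"
      by (cases "x \<in> {-R..R}") (auto intro: ennreal_leI)
  qed
  also have "\<dots> = ennreal (4 * R * \<epsilon>\<^sup>2 / \<bar>y\<bar>)"
    using assms by (simp add: nn_integral_cmult_indicator ennreal_mult'[symmetric])
  finally have "\<bar>G_eps \<alpha> R \<epsilon> y\<bar> \<le> 4 * R * \<epsilon>\<^sup>2 / \<bar>y\<bar> / \<epsilon>"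
    using assms by (intro abs_G_eps_le integrable_G_integrand) auto
  then show ?thesis
    using assms(1) by (simp add: power2_eq_square)
qed

lemma G_eps_sq_le_near:
  assumes "0 < \<alpha>" "\<alpha> < 1" "0 < \<epsilon>" "\<epsilon> \<le> 1"
  shows "(G_eps \<alpha> R \<epsilon> y)\<^sup>2 \<le> \<epsilon> powr (1-\<alpha>) * (8/(1-\<alpha>) + 8/\<alpha>)\<^sup>2"
    (is "_ \<le> ?p * ?K\<^sup>2")
proof -
  have p_bounds: "0 \<le> ?p" "?p \<le> 1"
    using assms by (auto intro: powr_le1)
  have "\<epsilon>\<^sup>2 \<le> 1"
    using assms by (simp add: power_le_one)
  then have "(3 + \<epsilon>\<^sup>2) * (2/(1-\<alpha>) + 2/\<alpha>) \<le> 4 * (2/(1-\<alpha>) + 2/\<alpha>)"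
    using assms by (intro mult_right_mono) auto
  also have "\<dots> = ?K"
    by (simp add: distrib_left)
  finally have "(3 + \<epsilon>\<^sup>2) * (2/(1-\<alpha>) + 2/\<alpha>) \<le> ?K" .
  then have "?p * (3 + \<epsilon>\<^sup>2) * (2/(1-\<alpha>) + 2/\<alpha>) \<le> ?p * ?K"
    using p_bounds by (simp add: mult.assoc mult_left_mono)
  then have "\<bar>G_eps \<alpha> R \<epsilon> y\<bar> \<le> ?p * ?K"
    using abs_G_eps_le_near[OF assms(3,1,2), of R y] by linarith
  then have "(G_eps \<alpha> R \<epsilon> y)\<^sup>2 \<le> (?p * ?K)\<^sup>2"
    by (metis abs_ge_zero power2_abs power_mono)
  also have "\<dots> = ?p * (?p * ?K\<^sup>2)"
    by (simp add: power2_eq_square)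
  also have "\<dots> \<le> ?p * ?K\<^sup>2"
    using p_bounds by (simp add: mult_left_le_one_le mult_left_mono)
  finally show ?thesis .
qed

lemma G_eps_sq_le_far:
  assumes "0 < \<alpha>" "\<alpha> < 1" "1 < R" "0 < \<epsilon>" "\<epsilon> < 1" "2 * R \<le> \<bar>y\<bar>"
  shows "(G_eps \<alpha> R \<epsilon> y)\<^sup>2 \<le> 16 * R\<^sup>2 * \<epsilon> powr (1-\<alpha>) * \<bar>y\<bar> powr (-2)"
proof -
  have "\<bar>G_eps \<alpha> R \<epsilon> y\<bar> \<le> 4 * R * \<epsilon> / \<bar>y\<bar>"
    using assms by (intro abs_G_eps_le_far) auto
  then have "(G_eps \<alpha> R \<epsilon> y)\<^sup>2 \<le> (4 * R * \<epsilon> / \<bar>y\<bar>)\<^sup>2"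
    by (metis abs_ge_zero power2_abs power_mono)
  also have "\<dots> = 16 * R\<^sup>2 * \<epsilon>\<^sup>2 * \<bar>y\<bar> powr (-2)"
    using assms by (simp add: power2_eq_square powr_minus_divide powr_numeral field_simps)
  also have "\<epsilon>\<^sup>2 \<le> \<epsilon> powr (1-\<alpha>)"
  proof -
    have "\<epsilon>\<^sup>2 \<le> \<epsilon>"
      using assms by (simp add: power2_eq_square mult_left_le_one_le)
    also have "\<epsilon> \<le> \<epsilon> powr (1-\<alpha>)"
      using powr_mono'[of "1-\<alpha>" 1 \<epsilon>] assms by simp
    finally show ?thesis .
  qed
  finally show ?thesis
    by (simp add: mult_left_mono mult_right_mono)
qed

lemma G_eps_sq_le:
  assumes "0 < \<alpha>" "\<alpha> < 1" "1 < R" "0 < \<epsilon>" "\<epsilon> < 1"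
  shows "(G_eps \<alpha> R \<epsilon> y)\<^sup>2 \<le> \<epsilon> powr (1-\<alpha>) *
    ((8/(1-\<alpha>) + 8/\<alpha>)\<^sup>2 * indicator {-(2*R)..2*R} y
     + 16 * R\<^sup>2 * (if 1 \<le> \<bar>y\<bar> then \<bar>y\<bar> powr (-2) else 0))"
  (is "_ \<le> ?p * (?K * _ + ?c * ?T)")
proof -
  have "0 \<le> ?p" "0 \<le> ?K" "0 \<le> ?c" "0 \<le> ?T"
    by simp_all
  show ?thesis
  proof (cases "\<bar>y\<bar> < 2 * R")
    case True
    then have "?p * ?K \<le> ?p * (?K * indicator {-(2*R)..2*R} y + ?c * ?T)"
      using \<open>0 \<le> ?p\<close> \<open>0 \<le> ?c\<close> \<open>0 \<le> ?T\<close> by (intro mult_left_mono) (auto simp: indicator_def)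
    then show ?thesis
      using G_eps_sq_le_near[of \<alpha> \<epsilon> R y] assms by linarith
  next
    case False
    have "(G_eps \<alpha> R \<epsilon> y)\<^sup>2 \<le> ?p * (?c * \<bar>y\<bar> powr (-2))"
      using G_eps_sq_le_far[of \<alpha> R \<epsilon> y] assms False by (simp add: mult_ac)
    also have "\<dots> \<le> ?p * (?K * indicator {-(2*R)..2*R} y + ?c * ?T)"
      using assms False \<open>0 \<le> ?p\<close> \<open>0 \<le> ?K\<close> by (intro mult_left_mono) auto
    finally show ?thesis .
  qed
qed

lemma G_energy_le_powr:
  assumes "0 < \<alpha>" "\<alpha> < 1" "1 < R"
  shows "\<exists>C. \<forall>\<epsilon>. 0 < \<epsilon> \<and> \<epsilon> < 1 \<longrightarrow> G_energy \<alpha> R \<epsilon> \<le> ennreal (C * \<epsilon> powr (1 - \<alpha>))"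
proof (intro exI allI impI)
  fix \<epsilon> :: real
  assume eps: "0 < \<epsilon> \<and> \<epsilon> < 1"
  define p where "p = \<epsilon> powr (1 - \<alpha>)"
  define K where "K = (8/(1-\<alpha>) + 8/\<alpha>)\<^sup>2"
  define T where "T y = (if 1 \<le> \<bar>y\<bar> then \<bar>y\<bar> powr (-2) else 0)" for y :: real
  have [measurable]: "T \<in> borel_measurable borel"
    unfolding T_def by measurable
  have "G_energy \<alpha> R \<epsilon> \<le> (\<integral>\<^sup>+y. ennreal p *
      (ennreal K * indicator {-(2*R)..2*R} y + ennreal (16 * R\<^sup>2) * ennreal (T y)) \<partial>lborel)"
    unfolding G_energy_def
  proof (rule nn_integral_mono)
    fix y
    have "ennreal ((G_eps \<alpha> R \<epsilon> y)\<^sup>2) \<le> ennreal (p * (K * indicator {-(2*R)..2*R} y + 16 * R\<^sup>2 * T y))"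
      unfolding p_def K_def T_def using assms eps by (intro ennreal_leI G_eps_sq_le) auto
    also have "\<dots> = ennreal p * (ennreal K * indicator {-(2*R)..2*R} y + ennreal (16 * R\<^sup>2) * ennreal (T y))"
      by (cases "y \<in> {-(2*R)..2*R}") (simp_all add: p_def K_def T_def ennreal_mult' ennreal_plus)
    finally show "ennreal ((G_eps \<alpha> R \<epsilon> y)\<^sup>2) \<le> \<dots>" .
  qed
  also have "\<dots> = ennreal p * (ennreal K * ennreal (4 * R) + ennreal (16 * R\<^sup>2) * (\<integral>\<^sup>+y. ennreal (T y) \<partial>lborel))"
    using assms by (simp add: nn_integral_cmult nn_integral_add nn_integral_cmult_indicator)
  also have "\<dots> \<le> ennreal p * (ennreal K * ennreal (4 * R) + ennreal (16 * R\<^sup>2) * 2)"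
    using nn_integral_inverse_square_tail unfolding T_def
    by (intro mult_left_mono add_left_mono) auto
  also have "ennreal K * ennreal (4 * R) + ennreal (16 * R\<^sup>2) * 2 = ennreal (K * (4 * R) + 32 * R\<^sup>2)"
  proof -
    have "ennreal (16 * R\<^sup>2) * 2 = ennreal (16 * R\<^sup>2 * 2)"
      by (subst ennreal_mult') auto
    then show ?thesis
      using assms by (simp add: K_def ennreal_mult'[symmetric] ennreal_plus[symmetric] del: ennreal_plus)
  qed
  also have "ennreal p * \<dots> = ennreal ((K * (4 * R) + 32 * R\<^sup>2) * p)"
    by (simp add: p_def ennreal_mult'[symmetric] mult.commute)
  finally show "G_energy \<alpha> R \<epsilon> \<le> ennreal ((K * (4 * R) + 32 * R\<^sup>2) * \<epsilon> powr (1 - \<alpha>))"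
    by (simp add: p_def)
qed

lemma deriv_u_eps_eq_cos:
  assumes "\<epsilon> \<noteq> 0" "\<bar>t\<bar> < R - 1"
  shows "deriv (u_eps R \<epsilon>) t = cos (t / \<epsilon>\<^sup>2)"
proof -
  have "((\<lambda>s. \<epsilon>\<^sup>2 * sin (s / \<epsilon>\<^sup>2)) has_field_derivative \<epsilon>\<^sup>2 * (cos (t / \<epsilon>\<^sup>2) * (1 / \<epsilon>\<^sup>2))) (at t)"
    by (intro DERIV_cmult DERIV_fun_sin DERIV_cdivide DERIV_ident)
  then have "((\<lambda>s. \<epsilon>\<^sup>2 * sin (s / \<epsilon>\<^sup>2)) has_field_derivative cos (t / \<epsilon>\<^sup>2)) (at t)"
    using assms(1) by simp
  then have "(u_eps R \<epsilon> has_field_derivative cos (t / \<epsilon>\<^sup>2)) (at t)"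
    by (rule has_field_derivative_transform_within_open[where S = "{-(R-1)<..<R-1}"])
       (use assms(2) in \<open>auto simp: u_eps_def cutoff_eq_1\<close>)
  then show ?thesis
    by (rule DERIV_imp_deriv)
qed

lemma has_integral_cos_sq:
  fixes c b :: real
  assumes "c \<noteq> 0" "0 \<le> b"
  shows "((\<lambda>t. (cos (t / c))\<^sup>2) has_integral (b + c / 2 * sin (2 * b / c))) {-b..b}"
proof -
  define F where "F t = t / 2 + c / 4 * sin (2 * t / c)" for t
  have "(F has_real_derivative (cos (t / c))\<^sup>2) (at t)" for t
  proof -
    have "(F has_real_derivative 1/2 + c / 4 * (cos (2 * t / c) * (2 * 1 / c))) (at t)"
      unfolding F_def by (intro DERIV_add DERIV_cmult DERIV_fun_sin DERIV_cdivide DERIV_ident)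
    moreover have "cos (2 * t / c) = 2 * (cos (t / c))\<^sup>2 - 1"
      using cos_double_cos[of "t / c"] by simp
    ultimately show ?thesis
      using assms(1) by (simp add: field_simps)
  qed
  then have "((\<lambda>t. (cos (t / c))\<^sup>2) has_integral (F b - F (-b))) {-b..b}"
    using assms(2)
    by (intro fundamental_theorem_of_calculus)
       (auto intro: has_field_derivative_at_within
         simp: has_real_derivative_iff_has_vector_derivative[symmetric])
  then show ?thesis
    by (simp add: F_def)
qed

lemma deriv_energy_ge:
  assumes "1 < R" "\<epsilon> \<noteq> 0" "\<epsilon>\<^sup>2 \<le> (R - 1) / 2"
  shows "ennreal ((R - 1) / 4) \<le> deriv_energy R \<epsilon>"
proof -
  define b where "b = (R - 1) / 2"
  have "\<epsilon>\<^sup>2 / 2 * (-1) \<le> \<epsilon>\<^sup>2 / 2 * sin (2 * b / \<epsilon>\<^sup>2)"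
    by (intro mult_left_mono) auto
  then have "(R - 1) / 4 \<le> b + \<epsilon>\<^sup>2 / 2 * sin (2 * b / \<epsilon>\<^sup>2)"
    using assms(3) unfolding b_def by linarith
  also have "ennreal \<dots> = (\<integral>\<^sup>+t. ennreal ((cos (t / \<epsilon>\<^sup>2))\<^sup>2) * indicator {-b..b} t \<partial>lborel)"
    using has_integral_cos_sq[of "\<epsilon>\<^sup>2" b] assms
    by (intro nn_integral_has_integral_lebesgue'[symmetric]) (auto simp: b_def)
  also have "\<dots> \<le> deriv_energy R \<epsilon>"
    unfolding deriv_energy_def
  proof (rule nn_integral_mono)
    fix t
    have "b < R - 1"
      using assms(1) by (simp add: b_def)
    then have "\<bar>t\<bar> < R - 1" if "t \<in> {-b..b}"
      using that unfolding atLeastAtMost_iff by arith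
    then show "ennreal ((cos (t / \<epsilon>\<^sup>2))\<^sup>2) * indicator {-b..b} t \<le> ennreal ((deriv (u_eps R \<epsilon>) t)\<^sup>2)"
      using assms(2) by (auto simp: indicator_def deriv_u_eps_eq_cos)
  qed
  finally show ?thesis
    by (simp add: ennreal_leI)
qed

lemma eventually_deriv_energy_ge:
  assumes "1 < R"
  shows "\<forall>\<^sub>F \<epsilon> in at_right 0. ennreal ((R - 1) / 4) \<le> deriv_energy R \<epsilon>"
proof -
  have "\<forall>\<^sub>F \<epsilon> in at_right 0. 0 < \<epsilon> \<and> \<epsilon> < min 1 ((R - 1) / 2)"
    unfolding eventually_at_right_field using assms by (intro exI[of _ "min 1 ((R - 1) / 2)"]) auto
  then show ?thesis
  proof eventually_elim
    case (elim \<epsilon>)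
    then have "\<epsilon>\<^sup>2 \<le> \<epsilon>"
      by (simp add: power2_eq_square mult_left_le_one_le)
    with elim show ?case
      using assms by (intro deriv_energy_ge) auto
  qed
qed

lemma tendsto_zero_if_le_powr:
  fixes f :: "real \<Rightarrow> ennreal"
  assumes "0 < p" "\<forall>\<^sub>F \<epsilon> in at_right 0. f \<epsilon> \<le> ennreal (C * \<epsilon> powr p)"
  shows "(f \<longlongrightarrow> 0) (at_right 0)"
proof (rule tendsto_sandwich[of "\<lambda>_. 0" _ _ "\<lambda>\<epsilon>. ennreal (C * \<epsilon> powr p)"])
  have "((\<lambda>\<epsilon>::real. \<epsilon> powr p) \<longlongrightarrow> 0) (at_right 0)"
    using assms(1) eventually_at_right_less[of 0]
    by (intro tendsto_zero_powrI tendsto_ident_at tendsto_const) (auto elim: eventually_mono)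
  then have "((\<lambda>\<epsilon>. C * \<epsilon> powr p) \<longlongrightarrow> 0) (at_right 0)"
    using tendsto_mult_right_zero by blast
  then show "((\<lambda>\<epsilon>. ennreal (C * \<epsilon> powr p)) \<longlongrightarrow> 0) (at_right 0)"
    using tendsto_ennrealI by fastforce
qed (use assms(2) in auto)

lemma not_eventually_mult_le_if_tendsto_zero:
  fixes f g :: "'a \<Rightarrow> ennreal"
  assumes "F \<noteq> bot" "(f \<longlongrightarrow> 0) F" "0 < m" "\<forall>\<^sub>F x in F. m \<le> g x" "0 < c"
  shows "\<not> (\<forall>\<^sub>F x in F. c * g x \<le> f x)"
proof
  assume "\<forall>\<^sub>F x in F. c * g x \<le> f x"
  moreover have "\<forall>\<^sub>F x in F. f x < c * m"
    using assms(2,3,5) by (intro order_tendstoD(2)) (auto simp: ennreal_zero_less_mult_iff)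
  ultimately have "\<forall>\<^sub>F x in F. False"
    using assms(4) by eventually_elim (use mult_left_mono[of m _ c] in fastforce)
  with assms(1) show False
    by simp
qed

theorem mainTheorem3:
  fixes \<alpha> R :: real
  assumes "0 < \<alpha>" "\<alpha> < 1" "R > 1"
  shows "(\<forall>\<epsilon>>0. \<forall>y. integrable lborel (G_integrand \<alpha> R \<epsilon> y))
    \<and> (\<exists>C::real. \<forall>\<epsilon>. 0 < \<epsilon> \<and> \<epsilon> < 1 \<longrightarrow>
          G_energy \<alpha> R \<epsilon> \<le> ennreal (C * \<epsilon> powr (1 - \<alpha>)))
    \<and> ((G_energy \<alpha> R) \<longlongrightarrow> 0) (at_right 0)
    \<and> Liminf (at_right 0) (deriv_energy R) > 0
    \<and> \<not> (\<exists>c::real. c > 0 \<and>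
          (\<forall>\<^sub>F \<epsilon> in at_right 0. G_energy \<alpha> R \<epsilon> \<ge> ennreal c * deriv_energy R \<epsilon>))"
proof -
  obtain C where C: "\<forall>\<epsilon>. 0 < \<epsilon> \<and> \<epsilon> < 1 \<longrightarrow> G_energy \<alpha> R \<epsilon> \<le> ennreal (C * \<epsilon> powr (1 - \<alpha>))"
    using G_energy_le_powr[OF assms] by blast
  have "\<forall>\<^sub>F \<epsilon> in at_right 0. G_energy \<alpha> R \<epsilon> \<le> ennreal (C * \<epsilon> powr (1 - \<alpha>))"
    unfolding eventually_at_right_field using C by (intro exI[of _ 1]) auto
  then have G_lim: "((G_energy \<alpha> R) \<longlongrightarrow> 0) (at_right 0)"
    using assms(2) by (intro tendsto_zero_if_le_powr) auto
  have D_ge: "\<forall>\<^sub>F \<epsilon> in at_right 0. ennreal ((R - 1) / 4) \<le> deriv_energy R \<epsilon>"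
    using eventually_deriv_energy_ge[OF assms(3)] .
  have m_pos: "0 < ennreal ((R - 1) / 4)"
    using assms(3) by simp
  have "0 < Liminf (at_right 0) (deriv_energy R)"
    using m_pos Liminf_bounded[OF D_ge] by (rule order.strict_trans2)
  moreover have "\<not> (\<exists>c::real. c > 0 \<and>
      (\<forall>\<^sub>F \<epsilon> in at_right 0. G_energy \<alpha> R \<epsilon> \<ge> ennreal c * deriv_energy R \<epsilon>))"
    using not_eventually_mult_le_if_tendsto_zero[OF trivial_limit_at_right_real G_lim m_pos D_ge]
    by (metis ennreal_less_zero_iff)
  ultimately show ?thesis
    using integrable_G_integrand assms C G_lim by blast
qed

end
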